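(* Consider a standard Nash equilibrium problem (NEP) with $N$ players in which player $\nu$ solves $\min_{x^\nu}\theta_\nu(x)$ subject to $c^\nu(x^\nu)\le 0$, where $\theta_\nu:\mathbb{R}^n\to\mathbb{R}$ and $c^\nu:\mathbb{R}^{n_\nu}\to\mathbb{R}^{r_\nu}$ are continuously differentiable (so each constraint function $c^\nu$ depends only on player $\nu$'s own variables). Let $c=(c^1,\ldots,c^N):\mathbb{R}^n\to\mathbb{R}^r$ be the concatenated constraint map and let $\bar x\in\mathbb{R}^n$. Then: (a) If $\bar x$ is feasible (i.e. $c(\bar x)\le 0$), then GNEP-CPLD holds in $\bar x$ if and only if $c$ satisfies (classical) CPLD in $\bar x$. (b) GNEP-EMFCQ holds in $\bar x$ if and only if $c$ satisfies (classical) EMFCQ in $\bar x$.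
   Context: Variables: $x=(x^1,\ldots,x^N)\in\mathbb{R}^n$ with $x^\nu\in\mathbb{R}^{n_\nu}$, $n=n_1+\cdots+n_N$, $r=r_1+\cdots+r_N$; one writes $x=(x^\nu,x^{-\nu})$. For a differentiable $f$, $\nabla f$ denotes the transposed Jacobian and $\nabla_{x^\nu} f$ the submatrix corresponding to the components $x^\nu$. Vectors $v_1,\dots,v_k$ are positively linearly dependent if $\sum_i\lambda_i v_i=0$ has a nontrivial solution with all $\lambda_i\ge 0$. CPLD$_\nu$ at a point $x$ with $c^\nu(x)\le0$: whenever the partial gradients $\nabla_{x^\nu}c_i^\nu(x)$, $i\in I$, are positively linearly dependent for some $I\subset\{i: c_i^\nu(x)=0\}$, the partial gradients $\nabla_{x^\nu}c_i^\nu(y)$, $i\in I$, are linearly dependent for all $y$ in a neighbourhood of $x$. GNEP-CPLD holds at $x$ if CPLD$_\nu$ holds at $x$ for every $\nu$. EMFCQ$_\nu$ at a point $x$ (not necessarily feasible): there is $d^\nu\in\mathbb{R}^{n_\nu}$ with $\nabla_{x^\nu}c_i^\nu(x)^Td^\nu<0$ for every $i$ with $c_i^\nu(x)\ge0$. GNEP-EMFCQ holds at $x$ if EMFCQ$_\nu$ holds at $x$ for every $\nu$. Classical CPLD for $c$ at a feasible $x$: whenever $\nabla c_i(x)$, $i\in I$, are positively linearly dependent for some subset $I$ of active indices $\{i:c_i(x)=0\}$, the full gradients $\nabla c_i(y)$, $i\in I$, are linearly dependent for all $y$ near $x$. Classical EMFCQ for $c$ at $x$: there is $d\in\mathbb{R}^n$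 with $\nabla c_i(x)^Td<0$ for every $i$ with $c_i(x)\ge 0$. *)

theory Defs
  imports "HOL-Analysis.Analysis"
begin

text \<open>Players are the elements of a finite type 'p;
  blk j is the player owning coordinate j, so x^\<nu> = (x$j)_{blk j = \<nu>}.
  Player \<nu> has constraints c \<nu> i, i < r \<nu>, with gradient function gc \<nu> i.\<close>

definition lin_dep_fam :: "('i \<Rightarrow> 'a::real_vector) \<Rightarrow> 'i set \<Rightarrow> bool" where
  "lin_dep_fam v I \<longleftrightarrow> (\<exists>l. (\<exists>k\<in>I. l k \<noteq> 0) \<and> (\<Sum>k\<in>I. l k *\<^sub>R v k) = 0)"

definition pos_lin_dep_fam :: "('i \<Rightarrow> 'a::real_vector) \<Rightarrow> 'i set \<Rightarrow> bool" where
  "pos_lin_dep_fam v I \<longleftrightarrow>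
     (\<exists>l. (\<forall>k\<in>I. l k \<ge> 0) \<and> (\<exists>k\<in>I. l k \<noteq> 0) \<and> (\<Sum>k\<in>I. l k *\<^sub>R v k) = 0)"

text \<open>Partial gradient w.r.t. the block of player \<nu>, embedded in real^'n
  (zero outside the block).\<close>
definition partial_grad :: "('n \<Rightarrow> 'p) \<Rightarrow> 'p \<Rightarrow> real^'n \<Rightarrow> real^'n" where
  "partial_grad blk \<nu> g = (\<chi> j. if blk j = \<nu> then g $ j else 0)"

definition CPLD :: "'k set \<Rightarrow> ('k \<Rightarrow> real^'n \<Rightarrow> real) \<Rightarrow> ('k \<Rightarrow> real^'n \<Rightarrow> real^'n)
                    \<Rightarrow> real^'n \<Rightarrow> bool" where
  "CPLD K g G x \<longleftrightarrow>
    (\<forall>I. I \<subseteq> {k\<in>K. g k x = 0} \<longrightarrow> pos_lin_dep_fam (\<lambda>k. G k x) I \<longrightarrow>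
        (\<exists>e>0. \<forall>y\<in>ball x e. lin_dep_fam (\<lambda>k. G k y) I))"

definition EMFCQ :: "'k set \<Rightarrow> ('k \<Rightarrow> real^'n \<Rightarrow> real) \<Rightarrow> ('k \<Rightarrow> real^'n \<Rightarrow> real^'n)
                    \<Rightarrow> real^'n \<Rightarrow> bool" where
  "EMFCQ K g G x \<longleftrightarrow> (\<exists>d. \<forall>k\<in>K. g k x \<ge> 0 \<longrightarrow> G k x \<bullet> d < 0)"

definition CPLD_player :: "('n \<Rightarrow> 'p) \<Rightarrow> ('p \<Rightarrow> nat) \<Rightarrow> ('p \<Rightarrow> nat \<Rightarrow> real^'n \<Rightarrow> real)
      \<Rightarrow> ('p \<Rightarrow> nat \<Rightarrow> real^'n \<Rightarrow> real^'n) \<Rightarrow> 'p \<Rightarrow> real^'n \<Rightarrow> bool" where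
  "CPLD_player blk r c gc \<nu> x \<longleftrightarrow>
    (\<forall>I. I \<subseteq> {i. i < r \<nu> \<and> c \<nu> i x = 0} \<longrightarrow>
        pos_lin_dep_fam (\<lambda>i. partial_grad blk \<nu> (gc \<nu> i x)) I \<longrightarrow>
        (\<exists>e>0. \<forall>y\<in>ball x e. lin_dep_fam (\<lambda>i. partial_grad blk \<nu> (gc \<nu> i y)) I))"

definition GNEP_CPLD :: "('n \<Rightarrow> 'p) \<Rightarrow> ('p \<Rightarrow> nat) \<Rightarrow> ('p \<Rightarrow> nat \<Rightarrow> real^'n \<Rightarrow> real)
      \<Rightarrow> ('p \<Rightarrow> nat \<Rightarrow> real^'n \<Rightarrow> real^'n) \<Rightarrow> real^'n \<Rightarrow> bool" where
  "GNEP_CPLD blk r c gc x \<longleftrightarrow> (\<forall>\<nu>. CPLD_player blk r c gc \<nu> x)"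

definition EMFCQ_player :: "('n \<Rightarrow> 'p) \<Rightarrow> ('p \<Rightarrow> nat) \<Rightarrow> ('p \<Rightarrow> nat \<Rightarrow> real^'n \<Rightarrow> real)
      \<Rightarrow> ('p \<Rightarrow> nat \<Rightarrow> real^'n \<Rightarrow> real^'n) \<Rightarrow> 'p \<Rightarrow> real^'n \<Rightarrow> bool" where
  "EMFCQ_player blk r c gc \<nu> x \<longleftrightarrow>
    (\<exists>d. (\<forall>j. blk j \<noteq> \<nu> \<longrightarrow> d $ j = 0) \<and>
         (\<forall>i<r \<nu>. c \<nu> i x \<ge> 0 \<longrightarrow> partial_grad blk \<nu> (gc \<nu> i x) \<bullet> d < 0))"

definition GNEP_EMFCQ :: "('n \<Rightarrow> 'p) \<Rightarrow> ('p \<Rightarrow> nat) \<Rightarrow> ('p \<Rightarrow> nat \<Rightarrow> real^'n \<Rightarrow> real)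
      \<Rightarrow> ('p \<Rightarrow> nat \<Rightarrow> real^'n \<Rightarrow> real^'n) \<Rightarrow> real^'n \<Rightarrow> bool" where
  "GNEP_EMFCQ blk r c gc x \<longleftrightarrow> (\<forall>\<nu>. EMFCQ_player blk r c gc \<nu> x)"

end

theory Submission
  imports Defs
begin

(* A constraint of player \<nu> depends only on x^\<nu>, so its gradient vanishes outside the block
   of \<nu>: the full gradients coincide with the partial ones, and gradients of different players
   have disjoint supports.  Projecting a positive linear dependence of the whole family onto
   the block of a player with a nonzero coefficient yields one among that player's gradients
   alone, while a dependence within one player is one of the whole family; so CPLD splits into
   the player-wise conditions.  For EMFCQ, a direction for the whole family restricts to each
   block, and directions for the individual players are glued blockwise. *)

lemma linear_partial_grad: "linear (partial_grad blk \<nu>)"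
  by (rule linearI) (auto simp: partial_grad_def vec_eq_iff)

lemma partial_grad_partial_grad:
  "partial_grad blk \<nu> (partial_grad blk \<mu> v) = (if \<nu> = \<mu> then partial_grad blk \<nu> v else 0)"
  by (auto simp: partial_grad_def vec_eq_iff)

lemma partial_grad_of_block_supported:
  "partial_grad blk \<mu> v = v \<Longrightarrow> partial_grad blk \<nu> v = (if \<mu> = \<nu> then v else 0)"
  by (metis partial_grad_partial_grad)

lemma inner_partial_grad: "partial_grad blk \<nu> a \<bullet> b = a \<bullet> partial_grad blk \<nu> b"
  unfolding inner_vec_def partial_grad_def by (auto intro: sum.cong)

lemma partial_grad_blockwise_vector:
  "partial_grad blk \<nu> (\<chi> j. d (blk j) $ j) = partial_grad blk \<nu> (d \<nu>)"
  by (auto simp: partial_grad_def vec_eq_iff)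

lemma gradient_block_supported:
  fixes f :: "real^'n \<Rightarrow> real" and blk :: "'n \<Rightarrow> 'p"
  assumes deriv: "\<And>x. (f has_derivative (\<lambda>h. g x \<bullet> h)) (at x)"
    and depends_on_block: "\<And>x y. (\<forall>j. blk j = \<nu> \<longrightarrow> x $ j = y $ j) \<Longrightarrow> f x = f y"
  shows "partial_grad blk \<nu> (g x) = g x"
proof -
  let ?P = "partial_grad blk \<nu>"
  have "f \<circ> ?P = f"
    by (rule ext) (auto intro: depends_on_block simp: partial_grad_def)
  moreover have "(f \<circ> ?P has_derivative (\<lambda>h. g (?P x) \<bullet> ?P h)) (at x)"
    using diff_chain_at[OF linear_imp_has_derivative[OF linear_partial_grad] deriv]
    by (simp add: o_def)
  ultimately have "(f has_derivative (\<lambda>h. ?P (g (?P x)) \<bullet> h)) (at x)"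
    by (simp add: inner_partial_grad)
  then have "g x = ?P (g (?P x))"
    using has_derivative_unique[OF deriv] by (metis vector_eq_rdot)
  then show ?thesis
    by (metis partial_grad_partial_grad)
qed

lemma lin_dep_fam_subset:
  assumes "finite I" "J \<subseteq> I" "lin_dep_fam v J"
  shows "lin_dep_fam v I"
proof -
  obtain l where "\<exists>k\<in>J. l k \<noteq> 0" "(\<Sum>k\<in>J. l k *\<^sub>R v k) = 0"
    using assms(3) unfolding lin_dep_fam_def by blast
  moreover have "(\<Sum>k\<in>I. (if k \<in> J then l k else 0) *\<^sub>R v k) = (\<Sum>k\<in>J. l k *\<^sub>R v k)"
    using assms(1,2) by (intro sum.mono_neutral_cong_right) auto
  ultimately show ?thesis
    unfolding lin_dep_fam_def using assms(2)
    by (intro exI[of _ "\<lambda>k. if k \<in> J then l k else 0"]) auto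
qed

lemma pos_lin_dep_fam_subset:
  assumes "finite I" "J \<subseteq> I" "pos_lin_dep_fam v J"
  shows "pos_lin_dep_fam v I"
proof -
  obtain l where "\<forall>k\<in>J. l k \<ge> 0" "\<exists>k\<in>J. l k \<noteq> 0" "(\<Sum>k\<in>J. l k *\<^sub>R v k) = 0"
    using assms(3) unfolding pos_lin_dep_fam_def by blast
  moreover have "(\<Sum>k\<in>I. (if k \<in> J then l k else 0) *\<^sub>R v k) = (\<Sum>k\<in>J. l k *\<^sub>R v k)"
    using assms(1,2) by (intro sum.mono_neutral_cong_right) auto
  ultimately show ?thesis
    unfolding pos_lin_dep_fam_def using assms(2)
    by (intro exI[of _ "\<lambda>k. if k \<in> J then l k else 0"]) auto
qed

lemma lin_dep_fam_cong:
  "(\<And>k. k \<in> I \<Longrightarrow> v k = w k) \<Longrightarrow> lin_dep_fam v I \<longleftrightarrow> lin_dep_fam w I"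
  unfolding lin_dep_fam_def by (metis (no_types, lifting) sum.cong)

lemma pos_lin_dep_fam_cong:
  "(\<And>k. k \<in> I \<Longrightarrow> v k = w k) \<Longrightarrow> pos_lin_dep_fam v I \<longleftrightarrow> pos_lin_dep_fam w I"
  unfolding pos_lin_dep_fam_def by (metis (no_types, lifting) sum.cong)

lemma lin_dep_fam_reindex:
  assumes "inj_on f J"
  shows "lin_dep_fam v (f ` J) \<longleftrightarrow> lin_dep_fam (\<lambda>k. v (f k)) J"
proof
  assume "lin_dep_fam v (f ` J)"
  then obtain l where "\<exists>k\<in>f ` J. l k \<noteq> 0" "(\<Sum>k\<in>f ` J. l k *\<^sub>R v k) = 0"
    unfolding lin_dep_fam_def by blast
  then show "lin_dep_fam (\<lambda>k. v (f k)) J"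
    unfolding lin_dep_fam_def using assms
    by (intro exI[of _ "\<lambda>k. l (f k)"]) (auto simp: sum.reindex)
next
  assume "lin_dep_fam (\<lambda>k. v (f k)) J"
  then obtain l where "\<exists>k\<in>J. l k \<noteq> 0" "(\<Sum>k\<in>J. l k *\<^sub>R v (f k)) = 0"
    unfolding lin_dep_fam_def by blast
  then show "lin_dep_fam v (f ` J)"
    unfolding lin_dep_fam_def using assms
    by (intro exI[of _ "\<lambda>k. l (inv_into J f k)"]) (auto simp: sum.reindex)
qed

lemma pos_lin_dep_fam_reindex:
  assumes "inj_on f J"
  shows "pos_lin_dep_fam v (f ` J) \<longleftrightarrow> pos_lin_dep_fam (\<lambda>k. v (f k)) J"
proof
  assume "pos_lin_dep_fam v (f ` J)"
  then obtain l where "\<forall>k\<in>f ` J. l k \<ge> 0" "\<exists>k\<in>f ` J. l k \<noteq> 0" "(\<Sum>k\<in>f ` J. l k *\<^sub>R v k) = 0"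
    unfolding pos_lin_dep_fam_def by blast
  then show "pos_lin_dep_fam (\<lambda>k. v (f k)) J"
    unfolding pos_lin_dep_fam_def using assms
    by (intro exI[of _ "\<lambda>k. l (f k)"]) (auto simp: sum.reindex)
next
  assume "pos_lin_dep_fam (\<lambda>k. v (f k)) J"
  then obtain l where "\<forall>k\<in>J. l k \<ge> 0" "\<exists>k\<in>J. l k \<noteq> 0" "(\<Sum>k\<in>J. l k *\<^sub>R v (f k)) = 0"
    unfolding pos_lin_dep_fam_def by blast
  then show "pos_lin_dep_fam v (f ` J)"
    unfolding pos_lin_dep_fam_def using assms
    by (intro exI[of _ "\<lambda>k. l (inv_into J f k)"]) (auto simp: sum.reindex)
qed

lemma pos_lin_dep_fam_block_separated:
  fixes v :: "'k \<Rightarrow> real^'n" and own :: "'k \<Rightarrow> 'p"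
  assumes "finite I"
    and supported: "\<And>k. k \<in> I \<Longrightarrow> partial_grad blk (own k) (v k) = v k"
  shows "pos_lin_dep_fam v I \<longleftrightarrow> (\<exists>\<nu>. pos_lin_dep_fam v {k\<in>I. own k = \<nu>})"
proof
  assume "pos_lin_dep_fam v I"
  then obtain l k\<^sub>0 where l_nonneg: "\<forall>k\<in>I. l k \<ge> 0" and "k\<^sub>0 \<in> I" "l k\<^sub>0 \<noteq> 0"
    and l_sum: "(\<Sum>k\<in>I. l k *\<^sub>R v k) = 0"
    unfolding pos_lin_dep_fam_def by blast
  let ?\<nu> = "own k\<^sub>0"
  have "(\<Sum>k\<in>{k\<in>I. own k = ?\<nu>}. l k *\<^sub>R v k) = (\<Sum>k\<in>I. if own k = ?\<nu> then l k *\<^sub>R v k else 0)"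
    using \<open>finite I\<close> by (rule sum.inter_filter)
  also have "\<dots> = (\<Sum>k\<in>I. partial_grad blk ?\<nu> (l k *\<^sub>R v k))"
  proof (rule sum.cong)
    fix k assume "k \<in> I"
    then show "(if own k = ?\<nu> then l k *\<^sub>R v k else 0) = partial_grad blk ?\<nu> (l k *\<^sub>R v k)"
      using partial_grad_of_block_supported[OF supported, of k ?\<nu>]
      by (simp add: linear_scale[OF linear_partial_grad])
  qed simp
  also have "\<dots> = partial_grad blk ?\<nu> (\<Sum>k\<in>I. l k *\<^sub>R v k)"
    by (simp add: linear_sum[OF linear_partial_grad])
  also have "\<dots> = 0"
    by (simp add: l_sum linear_0[OF linear_partial_grad])
  finally have "pos_lin_dep_fam v {k\<in>I. own k = ?\<nu>}"
    unfolding pos_lin_dep_fam_def using l_nonneg \<open>k\<^sub>0 \<in> I\<close> \<open>l k\<^sub>0 \<noteq> 0\<close> by blast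
  then show "\<exists>\<nu>. pos_lin_dep_fam v {k\<in>I. own k = \<nu>}" ..
next
  assume "\<exists>\<nu>. pos_lin_dep_fam v {k\<in>I. own k = \<nu>}"
  then obtain \<nu> where "pos_lin_dep_fam v {k\<in>I. own k = \<nu>}" ..
  then show "pos_lin_dep_fam v I"
    by (rule pos_lin_dep_fam_subset[OF \<open>finite I\<close>, rotated]) auto
qed

lemma CPLD_subset:
  assumes "K' \<subseteq> K" and "CPLD K g G x"
  shows "CPLD K' g G x"
  unfolding CPLD_def
proof (intro allI impI)
  fix I assume active: "I \<subseteq> {k\<in>K'. g k x = 0}" and dep: "pos_lin_dep_fam (\<lambda>k. G k x) I"
  have "I \<subseteq> {k\<in>K. g k x = 0}"
    using active \<open>K' \<subseteq> K\<close> by auto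
  then show "\<exists>e>0. \<forall>y\<in>ball x e. lin_dep_fam (\<lambda>k. G k y) I"
    using \<open>CPLD K g G x\<close> dep unfolding CPLD_def by simp
qed

lemma CPLD_block_separated_iff:
  fixes G :: "'k \<Rightarrow> real^'n \<Rightarrow> real^'n" and own :: "'k \<Rightarrow> 'p"
  assumes "finite K"
    and supported: "\<And>k y. k \<in> K \<Longrightarrow> partial_grad blk (own k) (G k y) = G k y"
  shows "CPLD K g G x \<longleftrightarrow> (\<forall>\<nu>. CPLD {k\<in>K. own k = \<nu>} g G x)"
proof
  assume "CPLD K g G x"
  then show "\<forall>\<nu>. CPLD {k\<in>K. own k = \<nu>} g G x"
    by (auto intro: CPLD_subset)
next
  assume blockwise: "\<forall>\<nu>. CPLD {k\<in>K. own k = \<nu>} g G x"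
  show "CPLD K g G x"
    unfolding CPLD_def
  proof (intro allI impI)
    fix I assume active: "I \<subseteq> {k\<in>K. g k x = 0}" and "pos_lin_dep_fam (\<lambda>k. G k x) I"
    have "finite I"
      using active \<open>finite K\<close> by (auto intro: finite_subset)
    have supported_I: "partial_grad blk (own k) (G k x) = G k x" if "k \<in> I" for k
      using that active by (intro supported) auto
    have "\<exists>\<nu>. pos_lin_dep_fam (\<lambda>k. G k x) {k\<in>I. own k = \<nu>}"
      using \<open>pos_lin_dep_fam (\<lambda>k. G k x) I\<close>
      by (simp add: pos_lin_dep_fam_block_separated[where blk = blk and own = own, OF \<open>finite I\<close>]
          supported_I)
    then obtain \<nu> where dep: "pos_lin_dep_fam (\<lambda>k. G k x) {k\<in>I. own k = \<nu>}" ..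
    have "{k\<in>I. own k = \<nu>} \<subseteq> {k\<in>{k\<in>K. own k = \<nu>}. g k x = 0}"
      using active by auto
    moreover have "CPLD {k\<in>K. own k = \<nu>} g G x"
      using blockwise ..
    ultimately have "\<exists>e>0. \<forall>y\<in>ball x e. lin_dep_fam (\<lambda>k. G k y) {k\<in>I. own k = \<nu>}"
      using dep unfolding CPLD_def by blast
    then obtain e where "e > 0"
      and near: "\<forall>y\<in>ball x e. lin_dep_fam (\<lambda>k. G k y) {k\<in>I. own k = \<nu>}"
      by blast
    have "lin_dep_fam (\<lambda>k. G k y) I" if "y \<in> ball x e" for y
      by (rule lin_dep_fam_subset[OF \<open>finite I\<close> _ near[rule_format, OF that]]) auto
    with \<open>e > 0\<close> show "\<exists>e>0. \<forall>y\<in>ball x e. lin_dep_fam (\<lambda>k. G k y) I"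
      by blast
  qed
qed

lemma EMFCQ_subset: "K' \<subseteq> K \<Longrightarrow> EMFCQ K g G x \<Longrightarrow> EMFCQ K' g G x"
  unfolding EMFCQ_def by blast

lemma EMFCQ_block_separated_iff:
  fixes G :: "'k \<Rightarrow> real^'n \<Rightarrow> real^'n" and own :: "'k \<Rightarrow> 'p"
  assumes supported: "\<And>k. k \<in> K \<Longrightarrow> partial_grad blk (own k) (G k x) = G k x"
  shows "EMFCQ K g G x \<longleftrightarrow> (\<forall>\<nu>. EMFCQ {k\<in>K. own k = \<nu>} g G x)"
proof
  assume "EMFCQ K g G x"
  then show "\<forall>\<nu>. EMFCQ {k\<in>K. own k = \<nu>} g G x"
    by (auto intro: EMFCQ_subset)
next
  assume "\<forall>\<nu>. EMFCQ {k\<in>K. own k = \<nu>} g G x"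
  then obtain d where d: "\<And>k. k \<in> K \<Longrightarrow> g k x \<ge> 0 \<Longrightarrow> G k x \<bullet> d (own k) < 0"
    unfolding EMFCQ_def by (metis (mono_tags, lifting) mem_Collect_eq)
  have "G k x \<bullet> (\<chi> j. d (blk j) $ j) = G k x \<bullet> d (own k)" if "k \<in> K" for k
    by (metis supported[OF that] inner_partial_grad partial_grad_blockwise_vector)
  with d show "EMFCQ K g G x"
    unfolding EMFCQ_def by (intro exI[of _ "\<chi> j. d (blk j) $ j"]) auto
qed

lemma CPLD_image:
  assumes "inj_on f K"
  shows "CPLD (f ` K) g G x \<longleftrightarrow> CPLD K (\<lambda>k. g (f k)) (\<lambda>k. G (f k)) x"
proof
  assume image: "CPLD (f ` K) g G x"
  show "CPLD K (\<lambda>k. g (f k)) (\<lambda>k. G (f k)) x"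
    unfolding CPLD_def
  proof (intro allI impI)
    fix J assume active: "J \<subseteq> {k\<in>K. g (f k) x = 0}" and dep: "pos_lin_dep_fam (\<lambda>k. G (f k) x) J"
    have inj: "inj_on f J"
      using inj_on_subset[OF assms] active by blast
    have "f ` J \<subseteq> {k\<in>f ` K. g k x = 0}"
      using active by auto
    moreover have "pos_lin_dep_fam (\<lambda>k. G k x) (f ` J)"
      using dep by (simp add: pos_lin_dep_fam_reindex[OF inj])
    ultimately have "\<exists>e>0. \<forall>y\<in>ball x e. lin_dep_fam (\<lambda>k. G k y) (f ` J)"
      using image unfolding CPLD_def by blast
    then show "\<exists>e>0. \<forall>y\<in>ball x e. lin_dep_fam (\<lambda>k. G (f k) y) J"
      by (simp add: lin_dep_fam_reindex[OF inj])
  qed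
next
  assume preimage: "CPLD K (\<lambda>k. g (f k)) (\<lambda>k. G (f k)) x"
  show "CPLD (f ` K) g G x"
    unfolding CPLD_def
  proof (intro allI impI)
    fix I assume active: "I \<subseteq> {k\<in>f ` K. g k x = 0}" and dep: "pos_lin_dep_fam (\<lambda>k. G k x) I"
    define J where "J = {k\<in>K. f k \<in> I}"
    have I_eq: "I = f ` J"
      using active by (auto simp: J_def)
    have inj: "inj_on f J"
      using inj_on_subset[OF assms] by (auto simp: J_def)
    have "J \<subseteq> {k\<in>K. g (f k) x = 0}"
      using active by (auto simp: J_def)
    moreover have "pos_lin_dep_fam (\<lambda>k. G (f k) x) J"
      using dep by (simp add: I_eq pos_lin_dep_fam_reindex[OF inj])
    ultimately have "\<exists>e>0. \<forall>y\<in>ball x e. lin_dep_fam (\<lambda>k. G (f k) y) J"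
      using preimage unfolding CPLD_def by blast
    then show "\<exists>e>0. \<forall>y\<in>ball x e. lin_dep_fam (\<lambda>k. G k y) I"
      by (simp add: I_eq lin_dep_fam_reindex[OF inj])
  qed
qed

lemma EMFCQ_image: "EMFCQ (f ` K) g G x \<longleftrightarrow> EMFCQ K (\<lambda>k. g (f k)) (\<lambda>k. G (f k)) x"
  unfolding EMFCQ_def by auto

lemma CPLD_player_iff_CPLD:
  assumes "\<And>i y. i < r \<nu> \<Longrightarrow> partial_grad blk \<nu> (gc \<nu> i y) = gc \<nu> i y"
  shows "CPLD_player blk r c gc \<nu> x \<longleftrightarrow> CPLD {..<r \<nu>} (c \<nu>) (gc \<nu>) x"
proof -
  have "pos_lin_dep_fam (\<lambda>i. partial_grad blk \<nu> (gc \<nu> i x)) I = pos_lin_dep_fam (\<lambda>i. gc \<nu> i x) I"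
    "lin_dep_fam (\<lambda>i. partial_grad blk \<nu> (gc \<nu> i y)) I = lin_dep_fam (\<lambda>i. gc \<nu> i y) I"
    if "I \<subseteq> {i. i < r \<nu> \<and> c \<nu> i x = 0}" for I y
    using that assms by (auto intro!: pos_lin_dep_fam_cong lin_dep_fam_cong)
  then show ?thesis
    unfolding CPLD_player_def CPLD_def by (simp cong: imp_cong)
qed

lemma EMFCQ_player_iff_EMFCQ:
  assumes supported: "\<And>i. i < r \<nu> \<Longrightarrow> partial_grad blk \<nu> (gc \<nu> i x) = gc \<nu> i x"
  shows "EMFCQ_player blk r c gc \<nu> x \<longleftrightarrow> EMFCQ {..<r \<nu>} (c \<nu>) (gc \<nu>) x"
proof
  assume "EMFCQ_player blk r c gc \<nu> x"
  then show "EMFCQ {..<r \<nu>} (c \<nu>) (gc \<nu>) x"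
    unfolding EMFCQ_player_def EMFCQ_def using supported by auto
next
  assume "EMFCQ {..<r \<nu>} (c \<nu>) (gc \<nu>) x"
  then obtain d where d: "\<And>i. i < r \<nu> \<Longrightarrow> c \<nu> i x \<ge> 0 \<Longrightarrow> gc \<nu> i x \<bullet> d < 0"
    unfolding EMFCQ_def by auto
  have "partial_grad blk \<nu> (gc \<nu> i x) \<bullet> partial_grad blk \<nu> d = gc \<nu> i x \<bullet> d" if "i < r \<nu>" for i
    by (metis supported[OF that] inner_partial_grad)
  with d show "EMFCQ_player blk r c gc \<nu> x"
    unfolding EMFCQ_player_def
    by (intro exI[of _ "partial_grad blk \<nu> d"]) (auto simp: partial_grad_def)
qed

theorem theorem2p5:
  fixes blk :: "'n::finite \<Rightarrow> 'p::finite"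
    and r :: "'p \<Rightarrow> nat"
    and \<theta> :: "'p \<Rightarrow> real^'n \<Rightarrow> real"
    and g\<theta> :: "'p \<Rightarrow> real^'n \<Rightarrow> real^'n"
    and c :: "'p \<Rightarrow> nat \<Rightarrow> real^'n \<Rightarrow> real"
    and gc :: "'p \<Rightarrow> nat \<Rightarrow> real^'n \<Rightarrow> real^'n"
    and xbar :: "real^'n"
  assumes theta_C1: "\<And>\<nu> x. (\<theta> \<nu> has_derivative (\<lambda>h. g\<theta> \<nu> x \<bullet> h)) (at x)"
    and theta_cont: "\<And>\<nu>. continuous_on UNIV (g\<theta> \<nu>)"
    and c_C1: "\<And>\<nu> i x. i < r \<nu> \<Longrightarrow> (c \<nu> i has_derivative (\<lambda>h. gc \<nu> i x \<bullet> h)) (at x)"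
    and c_cont: "\<And>\<nu> i. i < r \<nu> \<Longrightarrow> continuous_on UNIV (gc \<nu> i)"
    and c_own: "\<And>\<nu> i x y. i < r \<nu> \<Longrightarrow> (\<forall>j. blk j = \<nu> \<longrightarrow> x $ j = y $ j) \<Longrightarrow> c \<nu> i x = c \<nu> i y"
  shows "((\<forall>\<nu> i. i < r \<nu> \<longrightarrow> c \<nu> i xbar \<le> 0) \<longrightarrow>
           (GNEP_CPLD blk r c gc xbar \<longleftrightarrow>
            CPLD {(\<nu>, i). i < r \<nu>} (\<lambda>(\<nu>, i). c \<nu> i) (\<lambda>(\<nu>, i). gc \<nu> i) xbar))
       \<and> (GNEP_EMFCQ blk r c gc xbar \<longleftrightarrow>
            EMFCQ {(\<nu>, i). i < r \<nu>} (\<lambda>(\<nu>, i). c \<nu> i) (\<lambda>(\<nu>, i). gc \<nu> i) xbar)"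
proof -
  let ?K = "{(\<nu>, i). i < r \<nu>}" and ?c = "\<lambda>(\<nu>, i). c \<nu> i" and ?gc = "\<lambda>(\<nu>, i). gc \<nu> i"
  have supported: "partial_grad blk \<nu> (gc \<nu> i y) = gc \<nu> i y" if "i < r \<nu>" for \<nu> i y
    using gradient_block_supported[OF c_C1[OF that] c_own[OF that]] .
  have player_block: "{k\<in>?K. fst k = \<nu>} = Pair \<nu> ` {..<r \<nu>}" for \<nu>
    by auto
  have "finite ?K"
    by (rule finite_subset[of _ "SIGMA \<nu>:UNIV. {..<r \<nu>}"]) auto
  have "GNEP_CPLD blk r c gc xbar \<longleftrightarrow> (\<forall>\<nu>. CPLD {..<r \<nu>} (c \<nu>) (gc \<nu>) xbar)"
    unfolding GNEP_CPLD_def by (simp add: CPLD_player_iff_CPLD supported)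
  also have "\<dots> \<longleftrightarrow> (\<forall>\<nu>. CPLD {k\<in>?K. fst k = \<nu>} ?c ?gc xbar)"
    unfolding player_block by (simp add: CPLD_image inj_on_def)
  also have "\<dots> \<longleftrightarrow> CPLD ?K ?c ?gc xbar"
    by (rule CPLD_block_separated_iff[where own = fst, symmetric])
      (use \<open>finite ?K\<close> supported in auto)
  finally have CPLD_iff: "GNEP_CPLD blk r c gc xbar \<longleftrightarrow> CPLD ?K ?c ?gc xbar" .
  have "GNEP_EMFCQ blk r c gc xbar \<longleftrightarrow> (\<forall>\<nu>. EMFCQ {..<r \<nu>} (c \<nu>) (gc \<nu>) xbar)"
    unfolding GNEP_EMFCQ_def by (simp add: EMFCQ_player_iff_EMFCQ supported)
  also have "\<dots> \<longleftrightarrow> (\<forall>\<nu>. EMFCQ {k\<in>?K. fst k = \<nu>} ?c ?gc xbar)"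
    unfolding player_block by (simp add: EMFCQ_image)
  also have "\<dots> \<longleftrightarrow> EMFCQ ?K ?c ?gc xbar"
    by (rule EMFCQ_block_separated_iff[where own = fst, symmetric]) (use supported in auto)
  finally show ?thesis
    using CPLD_iff by blast
qed

end
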